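(* Let $\mathcal{A}$ be a finite set of alternatives and let $u,w\colon\mathcal{A}\times\mathbb{R}\to\mathbb{R}$ be two quasi-linear utility functions. (1) If both $u$ and $w$ pos-represent the same preference, then there exists a constant $C\in\mathbb{R}$ such that $w(a,z)=u(a,z)+C$ for all $a\in\mathcal{A}$, $z\in\mathbb{R}$. (2) If there exists a constant $C\geqslant 0$ such that $w(a,z)=u(a,z)-C$ for all $a\in\mathcal{A}$, $z\in\mathbb{R}$, then $w$ pos-represents every preference that is pos-represented by $u$.
   Context: A preference is a complete, transitive binary relation $\succcurlyeq$ on $\mathcal{A}\times\mathbb{R}$, where $(a,z)$ means that alternative $a$ is chosen and the agent pays $z$. A function $u\colon\mathcal{A}\times\mathbb{R}\to\mathbb{R}$ pos-represents $\succcurlyeq$ if for all $a,b\in\mathcal{A}$ and $z_a,z_b\in\mathbb{R}$ such that $u(a,z_a)\geqslant 0$ or $u(b,z_b)\geqslant 0$, one has $(a,z_a)\succcurlyeq(b,z_b)\iff u(a,z_a)\geqslant u(b,z_b)$. A utility function $u$ is quasi-linear if $u(a,z)=v(a)-z$ for some function $v\colon\mathcal{A}\to\mathbb{R}$. *)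

theory Defs
  imports Complex_Main
begin

text \<open>A preference on (alternative, payment) pairs: a complete, transitive binary relation.
  The relation is represented as a predicate; R x y means x is weakly preferred to y.\<close>

definition preference :: "('a \<times> real \<Rightarrow> 'a \<times> real \<Rightarrow> bool) \<Rightarrow> bool" where
  "preference R \<longleftrightarrow> (\<forall>x y. R x y \<or> R y x) \<and> (\<forall>x y z. R x y \<longrightarrow> R y z \<longrightarrow> R x z)"

definition pos_represents :: "('a \<times> real \<Rightarrow> real) \<Rightarrow> ('a \<times> real \<Rightarrow> 'a \<times> real \<Rightarrow> bool) \<Rightarrow> bool" where
  "pos_represents u R \<longleftrightarrow>
     (\<forall>a b za zb. u (a, za) \<ge> 0 \<or> u (b, zb) \<ge> 0 \<longrightarrow>
        (R (a, za) (b, zb) \<longleftrightarrow> u (a, za) \<ge> u (b, zb)))"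

definition quasi_linear :: "('a \<times> real \<Rightarrow> real) \<Rightarrow> bool" where
  "quasi_linear u \<longleftrightarrow> (\<exists>v :: 'a \<Rightarrow> real. \<forall>a z. u (a, z) = v a - z)"

end

theory Submission
  imports Defs
begin

text \<open>For quasi-linear \<open>u (a, z) = v a - z\<close>, paying \<open>v a - t\<close> gives every alternative the same
  utility \<open>t\<close>. Taking \<open>t \<ge> 0\<close> large, a pos-representation \<open>u\<close> forces indifference between all
  these bundles, and then a second pos-representation \<open>w\<close> must assign them equal utility,
  which makes \<open>w - u\<close> independent of the alternative. Conversely, lowering \<open>u\<close> by \<open>C \<ge> 0\<close>
  only shrinks the region where \<open>w \<ge> 0\<close>, on which the comparisons are inherited from \<open>u\<close>.\<close>

lemma pos_represents_indifferent:
  assumes "pos_represents u R" and "u p = u q" and "u p \<ge> 0"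
  shows "R p q" and "R q p"
  using assms unfolding pos_represents_def by (metis order_refl prod.collapse)+

lemma pos_represents_indifferent_eq:
  assumes "pos_represents w R" and "R p q" and "R q p" and "w p \<ge> 0"
  shows "w p = w q"
proof -
  have "w q \<le> w p" and "w p \<le> w q"
    using assms unfolding pos_represents_def by (metis prod.collapse)+
  then show ?thesis by simp
qed

lemma quasi_linear_pos_represents_unique:
  assumes "quasi_linear u" and "quasi_linear w"
    and "pos_represents u R" and "pos_represents w R"
  shows "\<exists>C. \<forall>a z. w (a, z) = u (a, z) + C"
proof -
  obtain v where v: "\<And>a z. u (a, z) = v a - z"
    using assms(1) unfolding quasi_linear_def by blast
  obtain x where x: "\<And>a z. w (a, z) = x a - z"
    using assms(2) unfolding quasi_linear_def by blast
  have gap_const: "x a - v a = x b - v b" for a b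
  proof -
    define t where "t = \<bar>x a - v a\<bar>"
    have "u (a, v a - t) = u (b, v b - t)" and "u (a, v a - t) \<ge> 0"
      using v by (simp_all add: t_def)
    then have "R (a, v a - t) (b, v b - t)" and "R (b, v b - t) (a, v a - t)"
      using pos_represents_indifferent[OF assms(3)] by blast+
    moreover have "w (a, v a - t) \<ge> 0"
      using x by (simp add: t_def)
    ultimately have "w (a, v a - t) = w (b, v b - t)"
      using pos_represents_indifferent_eq[OF assms(4)] by blast
    then show ?thesis using x by simp
  qed
  have "w (a, z) = u (a, z) + (x c - v c)" for a z c
    using v[of a z] x[of a z] gap_const[of a c] by simp
  then show ?thesis by blast
qed

lemma pos_represents_shift_down:
  assumes "pos_represents u R" and "C \<ge> 0" and "\<And>p. w p = u p - C"
  shows "pos_represents w R"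
  unfolding pos_represents_def
proof (intro allI impI)
  fix a b za zb
  assume "0 \<le> w (a, za) \<or> 0 \<le> w (b, zb)"
  then have "0 \<le> u (a, za) \<or> 0 \<le> u (b, zb)"
    using assms(2,3) by force
  then show "R (a, za) (b, zb) \<longleftrightarrow> w (b, zb) \<le> w (a, za)"
    using assms(1,3) unfolding pos_represents_def by auto
qed

theorem claim2:
  fixes u w :: "'a::finite \<times> real \<Rightarrow> real"
  assumes "quasi_linear u" and "quasi_linear w"
  shows "(\<forall>R. preference R \<and> pos_represents u R \<and> pos_represents w R \<longrightarrow>
            (\<exists>C::real. \<forall>a z. w (a, z) = u (a, z) + C))
       \<and> ((\<exists>C::real. C \<ge> 0 \<and> (\<forall>a z. w (a, z) = u (a, z) - C)) \<longrightarrow>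
            (\<forall>R. preference R \<and> pos_represents u R \<longrightarrow> pos_represents w R))"
proof (intro conjI allI impI)
  fix R
  assume "preference R \<and> pos_represents u R \<and> pos_represents w R"
  then show "\<exists>C. \<forall>a z. w (a, z) = u (a, z) + C"
    using quasi_linear_pos_represents_unique[OF assms] by blast
next
  fix R
  assume "\<exists>C\<ge>0. \<forall>a z. w (a, z) = u (a, z) - C" and "preference R \<and> pos_represents u R"
  then show "pos_represents w R"
    using pos_represents_shift_down by (metis prod.collapse)
qed

end
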